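(* Let $X$, $Y_k$ ($k\in\mathbb N$) and norms $\|\cdot\|_{X\oplus Y_k}$ be as in the generalized $\ell^2$-sum setting. Then $\Lambda(X\oplus Y_k)$ is compact in the weak$^*$ topology of the dual of $(\Sigma(X\oplus Y_k),\|\cdot\|_\Sigma)$.
   Context: Setting: $(X,\|\cdot\|_X)$ and $(Y_k,\|\cdot\|_{Y_k})$, $k\in\mathbb N$, are Banach spaces; for each $k$, $\|\cdot\|_{X\oplus Y_k}$ is a norm on $X\oplus Y_k$ coinciding with $\|\cdot\|_X$ on $X$ and with $\|\cdot\|_{Y_k}$ on $Y_k$, and monotone: $\|x+y_k\|_{X\oplus Y_k}\ge\|x\|_X$. Duals of direct sums are identified with direct sums of duals via $(x^*+y^* )(x+y)=x^*(x)+y^*(y)$. $\Lambda(X\oplus Y_k)$ is the set of functionals $x^*+\sum_k\alpha_ky_k^*$ (acting by $x+\sum y_k\mapsto x^*(x)+\sum\alpha_ky_k^*(y_k)$) with $x^*\in X^*$, $y_k^*\in Y_k^*$, $\|x^*+y_k^*\|_{X\oplus Y_k}\le1$ for all $k$, $0\le\alpha_k\le1$, $\sum\alpha_k^2\le1$. $\Sigma(X\oplus Y_k)=\{x+y_1+y_2+\dots:x\in X,y_k\in Y_k,\sum\|y_k\|_{Y_k}^2<\infty\}$ with $\|z\|_\Sigma=\sup\{|z^*(z)|:z^*\in\Lambda(X\oplus Y_k)\}$. *)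

theory Defs
  imports "HOL-Analysis.Analysis"
begin

text \<open>X is a real Banach space (the type 'x). Each Y k is a Banach space,
modelled as a closed linear subspace of a Banach type 'y with the induced norm.
N k x y is the norm of x + y in X \<oplus> Y k.\<close>

definition l2sum_setting ::
  "('x::banach itself) \<Rightarrow> (nat \<Rightarrow> 'y::banach set) \<Rightarrow> (nat \<Rightarrow> 'x \<Rightarrow> 'y \<Rightarrow> real) \<Rightarrow> bool" where
  "l2sum_setting _ Y N \<longleftrightarrow>
     (\<forall>k. subspace (Y k) \<and> closed (Y k)) \<and>
     \<comment> \<open>N k is a norm on X \<oplus> Y k\<close>
     (\<forall>k x y. y \<in> Y k \<longrightarrow> 0 \<le> N k x y) \<and>
     (\<forall>k x y. y \<in> Y k \<longrightarrow> N k x y = 0 \<longrightarrow> x = 0 \<and> y = 0) \<and>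
     (\<forall>k c x y. y \<in> Y k \<longrightarrow> N k (c *\<^sub>R x) (c *\<^sub>R y) = \<bar>c\<bar> * N k x y) \<and>
     (\<forall>k x1 y1 x2 y2. y1 \<in> Y k \<longrightarrow> y2 \<in> Y k \<longrightarrow>
        N k (x1 + x2) (y1 + y2) \<le> N k x1 y1 + N k x2 y2) \<and>
     \<comment> \<open>coincides with the given norms on X and on Y k\<close>
     (\<forall>k x. N k x 0 = norm x) \<and>
     (\<forall>k y. y \<in> Y k \<longrightarrow> N k 0 y = norm y) \<and>
     \<comment> \<open>monotone\<close>
     (\<forall>k x y. y \<in> Y k \<longrightarrow> norm x \<le> N k x y)"

text \<open>Y k^*: bounded linear functionals on the subspace Y k (values off Y k irrelevant).\<close>
definition dual_on :: "'y::real_normed_vector set \<Rightarrow> ('y \<Rightarrow> real) set" where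
  "dual_on S = {f. (\<forall>u\<in>S. \<forall>v\<in>S. \<forall>a b. f (a *\<^sub>R u + b *\<^sub>R v) = a * f u + b * f v)
                    \<and> (\<exists>C. \<forall>u\<in>S. \<bar>f u\<bar> \<le> C * norm u)}"

definition sum_dual_norm ::
  "('y::real_normed_vector) set \<Rightarrow> ('x \<Rightarrow> 'y \<Rightarrow> real) \<Rightarrow> ('x \<Rightarrow> real) \<Rightarrow> ('y \<Rightarrow> real) \<Rightarrow> real" where
  "sum_dual_norm Yk Nk xs ys = Sup {\<bar>xs x + ys y\<bar> | x y. y \<in> Yk \<and> Nk x y \<le> 1}"

text \<open>\<Sigma>(X \<oplus> Y k): an element x + y_1 + y_2 + ... is represented by the pair (x, (y_k)_k).\<close>
definition Sigma_set :: "(nat \<Rightarrow> 'y::real_normed_vector set) \<Rightarrow> ('x \<times> (nat \<Rightarrow> 'y)) set" where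
  "Sigma_set Y = {(x, ys). (\<forall>k. ys k \<in> Y k) \<and> summable (\<lambda>k. (norm (ys k))\<^sup>2)}"

definition Lambda_fun ::
  "(nat \<Rightarrow> 'y::real_normed_vector set) \<Rightarrow> ('x \<Rightarrow> real) \<Rightarrow> (nat \<Rightarrow> real) \<Rightarrow> (nat \<Rightarrow> 'y \<Rightarrow> real)
     \<Rightarrow> ('x \<times> (nat \<Rightarrow> 'y) \<Rightarrow> real)" where
  "Lambda_fun Y xs \<alpha> ys =
     restrict (\<lambda>(x, yy). xs x + (\<Sum>k. \<alpha> k * ys k (yy k))) (Sigma_set Y)"

definition Lambda_set ::
  "(nat \<Rightarrow> 'y::real_normed_vector set) \<Rightarrow> (nat \<Rightarrow> 'x::real_normed_vector \<Rightarrow> 'y \<Rightarrow> real)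
     \<Rightarrow> ('x \<times> (nat \<Rightarrow> 'y) \<Rightarrow> real) set" where
  "Lambda_set Y N = {Lambda_fun Y xs \<alpha> ys | xs \<alpha> ys.
      bounded_linear xs \<and> (\<forall>k. ys k \<in> dual_on (Y k)) \<and>
      (\<forall>k. sum_dual_norm (Y k) (N k) xs (ys k) \<le> 1) \<and>
      (\<forall>k. 0 \<le> \<alpha> k \<and> \<alpha> k \<le> 1) \<and> summable (\<lambda>k. (\<alpha> k)\<^sup>2) \<and> (\<Sum>k. (\<alpha> k)\<^sup>2) \<le> 1}"

definition Sigma_norm ::
  "(nat \<Rightarrow> 'y::real_normed_vector set) \<Rightarrow> (nat \<Rightarrow> 'x::real_normed_vector \<Rightarrow> 'y \<Rightarrow> real)
     \<Rightarrow> ('x \<times> (nat \<Rightarrow> 'y)) \<Rightarrow> real" where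
  "Sigma_norm Y N z = Sup {\<bar>f z\<bar> | f. f \<in> Lambda_set Y N}"

definition sig_add :: "('x::real_vector \<times> (nat \<Rightarrow> 'y::real_vector)) \<Rightarrow> ('x \<times> (nat \<Rightarrow> 'y)) \<Rightarrow> ('x \<times> (nat \<Rightarrow> 'y))" where
  "sig_add z w = (fst z + fst w, \<lambda>k. snd z k + snd w k)"
definition sig_scale :: "real \<Rightarrow> ('x::real_vector \<times> (nat \<Rightarrow> 'y::real_vector)) \<Rightarrow> ('x \<times> (nat \<Rightarrow> 'y))" where
  "sig_scale c z = (c *\<^sub>R fst z, \<lambda>k. c *\<^sub>R snd z k)"

definition Sigma_dual ::
  "(nat \<Rightarrow> 'y::real_normed_vector set) \<Rightarrow> (nat \<Rightarrow> 'x::real_normed_vector \<Rightarrow> 'y \<Rightarrow> real)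
     \<Rightarrow> ('x \<times> (nat \<Rightarrow> 'y) \<Rightarrow> real) set" where
  "Sigma_dual Y N = {f \<in> extensional (Sigma_set Y).
      (\<forall>z\<in>Sigma_set Y. \<forall>w\<in>Sigma_set Y. \<forall>a b.
          f (sig_add (sig_scale a z) (sig_scale b w)) = a * f z + b * f w) \<and>
      (\<exists>C. \<forall>z\<in>Sigma_set Y. \<bar>f z\<bar> \<le> C * Sigma_norm Y N z)}"

text \<open>Weak* topology on the dual: topology of pointwise convergence on \<Sigma>.\<close>
definition weak_star_Sigma ::
  "(nat \<Rightarrow> 'y::real_normed_vector set) \<Rightarrow> (nat \<Rightarrow> 'x::real_normed_vector \<Rightarrow> 'y \<Rightarrow> real)
     \<Rightarrow> ('x \<times> (nat \<Rightarrow> 'y) \<Rightarrow> real) topology" where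
  "weak_star_Sigma Y N =
     subtopology (product_topology (\<lambda>_. euclideanreal) (Sigma_set Y)) (Sigma_dual Y N)"

end

theory Submission
  imports Defs
begin

text \<open>A functional \<open>x\<^sup>* + \<Sum> \<alpha>\<^sub>k y\<^sub>k\<^sup>*\<close> of \<open>\<Lambda>\<close> is the image of its parameter triple
  \<open>(x\<^sup>*, \<alpha>, (y\<^sub>k\<^sup>*)\<^sub>k)\<close>. With the topology of pointwise convergence on every component, the
  admissible triples form a closed subset of a product of compact intervals (\<open>\<bar>x\<^sup>*(x)\<bar> \<le> \<parallel>x\<parallel>\<close>,
  \<open>0 \<le> \<alpha>\<^sub>k \<le> 1\<close>, \<open>\<bar>y\<^sub>k\<^sup>*(y)\<bar> \<le> \<parallel>y\<parallel>\<close>, all consequences of \<open>\<parallel>x\<^sup>* + y\<^sub>k\<^sup>*\<parallel> \<le> 1\<close>), hence compact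
  by Tychonoff. The map from triples to functionals on \<open>\<Sigma>\<close> is weak* continuous: each
  partial sum depends on finitely many coordinates, and the tails converge uniformly
  because \<open>\<bar>\<alpha>\<^sub>k y\<^sub>k\<^sup>*(y\<^sub>k)\<bar> \<le> (\<epsilon> \<alpha>\<^sub>k\<^sup>2 + \<parallel>y\<^sub>k\<parallel>\<^sup>2 / \<epsilon>) / 2\<close> with \<open>\<Sum> \<alpha>\<^sub>k\<^sup>2 \<le> 1\<close>. So \<open>\<Lambda>\<close> is a
  continuous image of a compact set.\<close>

lemma closedin_Collect_le:
  assumes "continuous_map X euclideanreal f" and "continuous_map X euclideanreal g"
  shows "closedin X {p \<in> topspace X. f p \<le> g p}"
  using closedin_continuous_map_preimage[OF continuous_map_diff[OF assms], of "{..0}"] by simp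

lemma closedin_Collect_eq:
  assumes "continuous_map X euclideanreal f" and "continuous_map X euclideanreal g"
  shows "closedin X {p \<in> topspace X. f p = g p}"
  using closedin_continuous_map_preimage[OF continuous_map_diff[OF assms], of "{0}"] by simp

lemma closedin_Collect_conj:
  assumes "closedin X {p \<in> topspace X. P p}" and "closedin X {p \<in> topspace X. Q p}"
  shows "closedin X {p \<in> topspace X. P p \<and> Q p}"
proof -
  have "{p \<in> topspace X. P p \<and> Q p} = {p \<in> topspace X. P p} \<inter> {p \<in> topspace X. Q p}"
    by blast
  then show ?thesis
    using assms by (simp add: closedin_Int)
qed

lemma closedin_Collect_all:
  assumes "\<And>i. closedin X {p \<in> topspace X. P i p}"
  shows "closedin X {p \<in> topspace X. \<forall>i. P i p}"
proof -
  have "{p \<in> topspace X. \<forall>i. P i p} = \<Inter> (range (\<lambda>i. {p \<in> topspace X. P i p}))"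
    by blast
  also have "closedin X \<dots>"
    by (rule closedin_Inter) (use assms in auto)
  finally show ?thesis .
qed

lemma closedin_Collect_imp:
  assumes "A \<Longrightarrow> closedin X {p \<in> topspace X. P p}"
  shows "closedin X {p \<in> topspace X. A \<longrightarrow> P p}"
  using assms by (cases A) auto

lemma abs_mult_le_weighted_squares:
  fixes a b e :: real
  assumes "0 < e"
  shows "\<bar>a * b\<bar> \<le> (e * a\<^sup>2 + b\<^sup>2 / e) / 2"
proof -
  have "0 \<le> (e * \<bar>a\<bar> - \<bar>b\<bar>)\<^sup>2 / e"
    using assms by simp
  also have "\<dots> = e * a\<^sup>2 - 2 * \<bar>a * b\<bar> + b\<^sup>2 / e"
    using assms by (simp add: power2_eq_square field_simps abs_mult)
  finally show ?thesis
    by simp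
qed

lemma summable_mult_bound_by_squares:
  fixes a c w :: "nat \<Rightarrow> real"
  assumes a: "summable (\<lambda>k. (a k)\<^sup>2)" and w: "summable (\<lambda>k. (w k)\<^sup>2)"
    and c: "\<And>k. \<bar>c k\<bar> \<le> w k" and e: "0 < e"
  shows "summable (\<lambda>k. a k * c k)"
    and "\<bar>\<Sum>k. a k * c k\<bar> \<le> (e * (\<Sum>k. (a k)\<^sup>2) + (\<Sum>k. (w k)\<^sup>2) / e) / 2"
proof -
  have bound: "norm (a k * c k) \<le> (e * (a k)\<^sup>2 + (w k)\<^sup>2 / e) / 2" for k
  proof -
    have "\<bar>a k * c k\<bar> \<le> \<bar>a k * w k\<bar>"
      using c[of k] by (simp add: abs_mult mult_left_mono)
    also have "\<dots> \<le> (e * (a k)\<^sup>2 + (w k)\<^sup>2 / e) / 2"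
      by (rule abs_mult_le_weighted_squares[OF e])
    finally show ?thesis
      by simp
  qed
  have sums: "(\<lambda>k. (e * (a k)\<^sup>2 + (w k)\<^sup>2 / e) / 2) sums
                ((e * (\<Sum>k. (a k)\<^sup>2) + (\<Sum>k. (w k)\<^sup>2) / e) / 2)"
    using a w by (intro sums_divide sums_add sums_mult summable_sums)
  show "summable (\<lambda>k. a k * c k)"
    using sums_summable[OF sums] bound by (rule summable_comparison_test')
  show "\<bar>\<Sum>k. a k * c k\<bar> \<le> (e * (\<Sum>k. (a k)\<^sup>2) + (\<Sum>k. (w k)\<^sup>2) / e) / 2"
    using norm_suminf_le[OF bound sums_summable[OF sums]] sums_unique[OF sums] by simp
qed

lemma summable_power2_if_partial_sums_le:
  fixes a :: "nat \<Rightarrow> real"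
  assumes "\<And>n. (\<Sum>k<n. (a k)\<^sup>2) \<le> B"
  shows "summable (\<lambda>k. (a k)\<^sup>2)" and "(\<Sum>k. (a k)\<^sup>2) \<le> B"
proof -
  show summable: "summable (\<lambda>k. (a k)\<^sup>2)"
  proof (rule bounded_imp_summable)
    show "(\<Sum>k\<le>n. (a k)\<^sup>2) \<le> B" for n
      using assms[of "Suc n"] by (simp add: lessThan_Suc_atMost)
  qed simp
  show "(\<Sum>k. (a k)\<^sup>2) \<le> B"
    using suminf_le_const[OF summable assms] .
qed

lemma power2_norm_add_le:
  fixes u v :: "'a::real_normed_vector"
  shows "(norm (u + v))\<^sup>2 \<le> 2 * (norm u)\<^sup>2 + 2 * (norm v)\<^sup>2"
proof -
  have "(norm (u + v))\<^sup>2 \<le> (norm u + norm v)\<^sup>2"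
    by (simp add: norm_triangle_ineq power_mono)
  also have "\<dots> \<le> 2 * (norm u)\<^sup>2 + 2 * (norm v)\<^sup>2"
    using zero_le_power2[of "norm u - norm v"] by (simp add: power2_eq_square algebra_simps)
  finally show ?thesis .
qed

lemma dual_on_scaleR:
  assumes "f \<in> dual_on S" and "u \<in> S"
  shows "f (c *\<^sub>R u) = c * f u"
proof -
  have "f (c *\<^sub>R u + 0 *\<^sub>R u) = c * f u + 0 * f u"
    using assms unfolding dual_on_def by blast
  then show ?thesis
    by simp
qed

type_synonym ('x, 'y) param = "('x \<Rightarrow> real) \<times> (nat \<Rightarrow> real) \<times> (nat \<Rightarrow> 'y \<Rightarrow> real)"

definition param_topology :: "('x, 'y) param topology" where
  "param_topology =
     prod_topology (product_topology (\<lambda>_. euclideanreal) UNIV)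
       (prod_topology (product_topology (\<lambda>_. euclideanreal) UNIV)
         (product_topology (\<lambda>_. product_topology (\<lambda>_. euclideanreal) UNIV) UNIV))"

lemma topspace_param_topology [simp]: "topspace param_topology = UNIV"
  by (simp add: param_topology_def PiE_UNIV_domain)

lemma continuous_map_param_xs [continuous_intros]:
  "continuous_map param_topology euclideanreal (\<lambda>p. fst p x)"
  unfolding param_topology_def
  by (intro continuous_map_compose[OF continuous_map_fst continuous_map_product_projection, unfolded o_def]) auto

lemma continuous_map_param_alpha [continuous_intros]:
  "continuous_map param_topology euclideanreal (\<lambda>p. fst (snd p) k)"
  unfolding param_topology_def
  by (intro continuous_map_compose[OF continuous_map_compose[OF continuous_map_snd continuous_map_fst]
        continuous_map_product_projection, unfolded o_def]) auto

lemma continuous_map_param_ys [continuous_intros]: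
  "continuous_map param_topology euclideanreal (\<lambda>p. snd (snd p) k y)"
proof -
  have "continuous_map param_topology
          (product_topology (\<lambda>_. product_topology (\<lambda>_. euclideanreal) UNIV) UNIV) (snd \<circ> snd)"
    unfolding param_topology_def
    by (rule continuous_map_compose[OF continuous_map_snd continuous_map_snd])
  from continuous_map_compose[OF continuous_map_compose[OF this continuous_map_product_projection[of k]]
         continuous_map_product_projection[of y]]
  show ?thesis by (simp add: o_def)
qed

text \<open>The constraint \<open>\<Sum> \<alpha>\<^sub>k\<^sup>2 \<le> 1\<close> is imposed through all partial sums, which keeps the set
  closed for pointwise convergence.\<close>

definition param_set ::
  "(nat \<Rightarrow> 'y::real_normed_vector set) \<Rightarrow> (nat \<Rightarrow> 'x::real_normed_vector \<Rightarrow> 'y \<Rightarrow> real)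
     \<Rightarrow> ('x, 'y) param set" where
  "param_set Y N = {(xs, \<alpha>, ys).
     (\<forall>u v a b. xs (a *\<^sub>R u + b *\<^sub>R v) = a * xs u + b * xs v) \<and>
     (\<forall>x. \<bar>xs x\<bar> \<le> norm x) \<and>
     (\<forall>k u v a b. u \<in> Y k \<longrightarrow> v \<in> Y k \<longrightarrow> ys k (a *\<^sub>R u + b *\<^sub>R v) = a * ys k u + b * ys k v) \<and>
     (\<forall>k y. \<bar>ys k y\<bar> \<le> norm y) \<and>
     (\<forall>k x y. y \<in> Y k \<longrightarrow> \<bar>xs x + ys k y\<bar> \<le> N k x y) \<and>
     (\<forall>k. 0 \<le> \<alpha> k \<and> \<alpha> k \<le> 1) \<and>
     (\<forall>n. (\<Sum>k<n. (\<alpha> k)\<^sup>2) \<le> 1)}"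

lemma closedin_param_set: "closedin param_topology (param_set Y N)"
proof -
  have "param_set Y N = {p \<in> topspace param_topology. p \<in> param_set Y N}"
    by simp
  also have "closedin param_topology \<dots>"
    unfolding param_set_def mem_Collect_eq split_beta
    by (intro closedin_Collect_conj closedin_Collect_all closedin_Collect_imp
        closedin_Collect_eq closedin_Collect_le; (intro continuous_intros)?; simp)
  finally show ?thesis .
qed

lemma compactin_param_set: "compactin param_topology (param_set Y N)"
proof (rule closed_compactin)
  let ?box = "(\<Pi>\<^sub>E x\<in>UNIV. cball 0 (norm x)) \<times> (\<Pi>\<^sub>E k\<in>UNIV. {0..1::real}) \<times>
              (\<Pi>\<^sub>E k\<in>UNIV. \<Pi>\<^sub>E y\<in>UNIV. cball 0 (norm y))"
  show "compactin param_topology ?box"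
    unfolding param_topology_def
    by (intro compactin_Times[THEN iffD2] disjI2 conjI compactin_PiE[THEN iffD2] ballI) simp_all
  show "param_set Y N \<subseteq> ?box"
    by (auto simp: param_set_def PiE_iff)
  show "closedin param_topology (param_set Y N)"
    by (rule closedin_param_set)
qed

lemma param_series_bound:
  assumes p: "(xs, \<alpha>, ys) \<in> param_set Y N" and z: "(x, yy) \<in> Sigma_set Y" and e: "0 < e"
  shows "summable (\<lambda>k. \<alpha> k * ys k (yy k))"
    and "\<bar>\<Sum>k. \<alpha> (k + n) * ys (k + n) (yy (k + n))\<bar>
           \<le> (e + (\<Sum>k. (norm (yy (k + n)))\<^sup>2) / e) / 2"
proof -
  have \<alpha>: "summable (\<lambda>k. (\<alpha> k)\<^sup>2)" "(\<Sum>k. (\<alpha> k)\<^sup>2) \<le> 1"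
    using p summable_power2_if_partial_sums_le[of \<alpha> 1] by (auto simp: param_set_def)
  have yy: "summable (\<lambda>k. (norm (yy k))\<^sup>2)"
    using z by (simp add: Sigma_set_def)
  have ys: "\<bar>ys k y\<bar> \<le> norm y" for k y
    using p by (simp add: param_set_def)
  show "summable (\<lambda>k. \<alpha> k * ys k (yy k))"
    using summable_mult_bound_by_squares(1)[OF \<alpha>(1) yy ys zero_less_one] .
  have \<alpha>_tail: "(\<Sum>k. (\<alpha> (k + n))\<^sup>2) \<le> 1"
    using suminf_minus_initial_segment[OF \<alpha>(1), of n] \<alpha>(2)
      sum_nonneg[of "{..<n}" "\<lambda>k. (\<alpha> k)\<^sup>2"] by simp
  have "\<bar>\<Sum>k. \<alpha> (k + n) * ys (k + n) (yy (k + n))\<bar>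
          \<le> (e * (\<Sum>k. (\<alpha> (k + n))\<^sup>2) + (\<Sum>k. (norm (yy (k + n)))\<^sup>2) / e) / 2"
    using summable_ignore_initial_segment[OF \<alpha>(1)] summable_ignore_initial_segment[OF yy] ys e
    by (intro summable_mult_bound_by_squares(2))
  also have "\<dots> \<le> (e + (\<Sum>k. (norm (yy (k + n)))\<^sup>2) / e) / 2"
    using mult_left_le[OF \<alpha>_tail, of e] e by simp
  finally show "\<bar>\<Sum>k. \<alpha> (k + n) * ys (k + n) (yy (k + n))\<bar>
                  \<le> (e + (\<Sum>k. (norm (yy (k + n)))\<^sup>2) / e) / 2" .
qed

definition param_functional ::
  "(nat \<Rightarrow> 'y::real_normed_vector set) \<Rightarrow> ('x, 'y) param \<Rightarrow> ('x \<times> (nat \<Rightarrow> 'y) \<Rightarrow> real)" where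
  "param_functional Y p = Lambda_fun Y (fst p) (fst (snd p)) (snd (snd p))"

lemma param_functional_apply:
  "(x, yy) \<in> Sigma_set Y \<Longrightarrow>
     param_functional Y (xs, \<alpha>, ys) (x, yy) = xs x + (\<Sum>k. \<alpha> k * ys k (yy k))"
  by (simp add: param_functional_def Lambda_fun_def)

lemma param_functional_partial_sums_uniform:
  assumes z: "(x, yy) \<in> Sigma_set Y" and e: "0 < e"
  shows "\<forall>\<^sub>F n in sequentially. \<forall>p \<in> param_set Y N.
           dist (fst p x + (\<Sum>k<n. fst (snd p) k * snd (snd p) k (yy k)))
             (param_functional Y p (x, yy)) < e"
proof -
  have yy: "summable (\<lambda>k. (norm (yy k))\<^sup>2)"
    using z by (simp add: Sigma_set_def)
  obtain M where M: "\<And>n. n \<ge> M \<Longrightarrow> norm (\<Sum>k. (norm (yy (k + n)))\<^sup>2) < e * e"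
    using suminf_exist_split[OF _ yy, of "e * e"] e by auto
  have "\<bar>(\<Sum>k. \<alpha> k * ys k (yy k)) - (\<Sum>k<n. \<alpha> k * ys k (yy k))\<bar> < e"
    if n: "n \<ge> M" and p: "(xs, \<alpha>, ys) \<in> param_set Y N" for n xs \<alpha> ys
  proof -
    have "\<bar>(\<Sum>k. \<alpha> k * ys k (yy k)) - (\<Sum>k<n. \<alpha> k * ys k (yy k))\<bar>
            = \<bar>\<Sum>k. \<alpha> (k + n) * ys (k + n) (yy (k + n))\<bar>"
      using suminf_minus_initial_segment[OF param_series_bound(1)[OF p z e]] by simp
    also have "\<dots> \<le> (e + (\<Sum>k. (norm (yy (k + n)))\<^sup>2) / e) / 2"
      by (rule param_series_bound(2)[OF p z e])
    also have "\<dots> < e"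
      using M[OF n] e by (simp add: divide_less_eq)
    finally show ?thesis .
  qed
  then show ?thesis
    unfolding eventually_sequentially using z
    by (force simp: param_functional_apply dist_real_def abs_minus_commute)
qed

lemma continuous_map_param_functional:
  fixes Y :: "nat \<Rightarrow> 'y::real_normed_vector set"
    and N :: "nat \<Rightarrow> 'x::real_normed_vector \<Rightarrow> 'y \<Rightarrow> real"
  shows "continuous_map (subtopology param_topology (param_set Y N))
     (product_topology (\<lambda>_. euclideanreal) (Sigma_set Y)) (param_functional Y)"
  unfolding continuous_map_componentwise
proof (intro conjI ballI)
  let ?X = "subtopology param_topology (param_set Y N)"
  show "param_functional Y ` topspace ?X \<subseteq> extensional (Sigma_set Y)"
    by (auto simp: param_functional_def Lambda_fun_def)
  fix z :: "'x \<times> (nat \<Rightarrow> 'y)"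
  assume z: "z \<in> Sigma_set Y"
  obtain x yy where z_eq: "z = (x, yy)"
    by (cases z)
  have "continuous_map ?X Met_TC.mtopology (\<lambda>p. param_functional Y p z)"
  proof (rule Met_TC.continuous_map_uniform_limit_alt[where F = sequentially])
    show "\<forall>\<^sub>F n in sequentially. continuous_map ?X Met_TC.mtopology
            (\<lambda>p. fst p x + (\<Sum>k<n. fst (snd p) k * snd (snd p) k (yy k)))"
      unfolding mtopology_is_euclidean
      by (intro always_eventually allI continuous_map_from_subtopology continuous_intros
          finite_lessThan)
    show "\<forall>\<^sub>F n in sequentially. \<forall>p\<in>topspace ?X.
            dist (fst p x + (\<Sum>k<n. fst (snd p) k * snd (snd p) k (yy k)))
              (param_functional Y p z) < e"
      if "0 < e" for e
      using param_functional_partial_sums_uniform[OF z[unfolded z_eq] that] z_eq by simp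
  qed auto
  then show "continuous_map ?X euclideanreal (\<lambda>p. param_functional Y p z)"
    by (simp add: mtopology_is_euclidean)
qed

context
  fixes Y :: "nat \<Rightarrow> 'y::banach set" and N :: "nat \<Rightarrow> 'x::banach \<Rightarrow> 'y \<Rightarrow> real"
  assumes setting: "l2sum_setting TYPE('x) Y N"
begin

lemma l2sum_subspace: "subspace (Y k)"
  using setting by (simp add: l2sum_setting_def)

lemma l2sum_norm_nonneg: "y \<in> Y k \<Longrightarrow> 0 \<le> N k x y"
  using setting by (simp add: l2sum_setting_def)

lemma l2sum_norm_eq_0D: "y \<in> Y k \<Longrightarrow> N k x y = 0 \<Longrightarrow> x = 0 \<and> y = 0"
  using setting by (simp add: l2sum_setting_def)

lemma l2sum_norm_scaleR: "y \<in> Y k \<Longrightarrow> N k (c *\<^sub>R x) (c *\<^sub>R y) = \<bar>c\<bar> * N k x y"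
  using setting by (simp add: l2sum_setting_def)

lemma l2sum_norm_triangle:
  "y1 \<in> Y k \<Longrightarrow> y2 \<in> Y k \<Longrightarrow> N k (x1 + x2) (y1 + y2) \<le> N k x1 y1 + N k x2 y2"
  using setting by (simp add: l2sum_setting_def)

lemma l2sum_norm_left: "N k x 0 = norm x"
  using setting by (simp add: l2sum_setting_def)

lemma l2sum_norm_right: "y \<in> Y k \<Longrightarrow> N k 0 y = norm y"
  using setting by (simp add: l2sum_setting_def)

lemma norm_le_l2sum_norm: "y \<in> Y k \<Longrightarrow> norm x \<le> N k x y"
  using setting by (simp add: l2sum_setting_def)

lemma norm_right_le_l2sum_norm:
  assumes y: "y \<in> Y k"
  shows "norm y \<le> 2 * N k x y"
proof -
  have "norm y = N k (x + - x) (y + 0)"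
    using l2sum_norm_right[OF y] by simp
  also have "\<dots> \<le> N k x y + N k (- x) 0"
    using l2sum_norm_triangle[OF y subspace_0[OF l2sum_subspace]] .
  also have "\<dots> \<le> 2 * N k x y"
    using norm_le_l2sum_norm[OF y, of x] by (simp add: l2sum_norm_left)
  finally show ?thesis .
qed

lemma bdd_above_sum_dual_norm_set:
  assumes xs: "bounded_linear xs" and ys: "ys \<in> dual_on (Y k)"
  shows "bdd_above {\<bar>xs x + ys y\<bar> | x y. y \<in> Y k \<and> N k x y \<le> 1}"
proof -
  obtain K where K: "\<And>x. norm (xs x) \<le> norm x * K" and "K > 0"
    using bounded_linear.pos_bounded[OF xs] by blast
  obtain C where C: "\<And>y. y \<in> Y k \<Longrightarrow> \<bar>ys y\<bar> \<le> C * norm y"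
    using ys unfolding dual_on_def by blast
  have "\<bar>xs x + ys y\<bar> \<le> K + 2 * \<bar>C\<bar>" if y: "y \<in> Y k" and N: "N k x y \<le> 1" for x y
  proof -
    have "norm x \<le> 1"
      using norm_le_l2sum_norm[OF y, of x] N by linarith
    then have "norm x * K \<le> K"
      using \<open>K > 0\<close> by (intro mult_left_le_one_le) auto
    then have "\<bar>xs x\<bar> \<le> K"
      using K[of x] by simp
    moreover have "\<bar>ys y\<bar> \<le> 2 * \<bar>C\<bar>"
    proof -
      have "norm y \<le> 2"
        using norm_right_le_l2sum_norm[OF y, of x] N by linarith
      then have "\<bar>C\<bar> * norm y \<le> 2 * \<bar>C\<bar>"
        by (simp add: mult_left_mono mult.commute)
      moreover have "C * norm y \<le> \<bar>C\<bar> * norm y"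
        by (simp add: mult_right_mono)
      ultimately show ?thesis
        using C[OF y] by linarith
    qed
    ultimately show ?thesis
      by linarith
  qed
  then show ?thesis
    by (intro bdd_aboveI) blast
qed

lemma sum_dual_norm_le_one_iff:
  assumes xs: "bounded_linear xs" and ys: "ys \<in> dual_on (Y k)"
  shows "sum_dual_norm (Y k) (N k) xs ys \<le> 1 \<longleftrightarrow> (\<forall>x. \<forall>y\<in>Y k. \<bar>xs x + ys y\<bar> \<le> N k x y)"
proof
  assume bound: "\<forall>x. \<forall>y\<in>Y k. \<bar>xs x + ys y\<bar> \<le> N k x y"
  have "N k 0 0 \<le> 1"
    by (simp add: l2sum_norm_left)
  then show "sum_dual_norm (Y k) (N k) xs ys \<le> 1"
    unfolding sum_dual_norm_def using bound subspace_0[OF l2sum_subspace]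
    by (intro cSup_least) (blast, fastforce intro: order_trans)
next
  assume "sum_dual_norm (Y k) (N k) xs ys \<le> 1"
  then have unit_ball: "\<bar>xs x + ys y\<bar> \<le> 1" if "y \<in> Y k" and "N k x y \<le> 1" for x y
    using cSup_upper[OF _ bdd_above_sum_dual_norm_set[OF xs ys]] that
    unfolding sum_dual_norm_def by fastforce
  show "\<forall>x. \<forall>y\<in>Y k. \<bar>xs x + ys y\<bar> \<le> N k x y"
  proof (intro allI ballI)
    fix x y assume y: "y \<in> Y k"
    show "\<bar>xs x + ys y\<bar> \<le> N k x y"
    proof (cases "N k x y = 0")
      case True
      then have "x = 0" and "y = 0"
        using l2sum_norm_eq_0D[OF y] by auto
      then show ?thesis
        using dual_on_scaleR[OF ys y, of 0] linear_0[OF bounded_linear.linear[OF xs]] True by simp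
    next
      case False
      then have pos: "N k x y > 0"
        using l2sum_norm_nonneg[OF y, of x] by simp
      define c where "c = 1 / N k x y"
      have cy: "c *\<^sub>R y \<in> Y k"
        using l2sum_subspace y by (rule subspace_scale)
      have "N k (c *\<^sub>R x) (c *\<^sub>R y) = 1"
        using l2sum_norm_scaleR[OF y] pos by (simp add: c_def)
      then have "\<bar>xs (c *\<^sub>R x) + ys (c *\<^sub>R y)\<bar> \<le> 1"
        using unit_ball[OF cy] by simp
      moreover have "xs (c *\<^sub>R x) + ys (c *\<^sub>R y) = c * (xs x + ys y)"
        using linear_scale[OF bounded_linear.linear[OF xs]] dual_on_scaleR[OF ys y]
        by (simp add: distrib_left)
      ultimately show ?thesis
        using pos by (simp add: c_def abs_mult divide_le_eq)
    qed
  qed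
qed

lemma Sigma_set_lincomb:
  assumes z: "z \<in> Sigma_set Y" and w: "w \<in> Sigma_set Y"
  shows "sig_add (sig_scale a z) (sig_scale b w) \<in> Sigma_set Y"
proof -
  obtain x yy x' ww where zw: "z = (x, yy)" "w = (x', ww)"
    by (cases z, cases w)
  have yy: "\<And>k. yy k \<in> Y k" "summable (\<lambda>k. (norm (yy k))\<^sup>2)"
    using z zw by (auto simp: Sigma_set_def)
  have ww: "\<And>k. ww k \<in> Y k" "summable (\<lambda>k. (norm (ww k))\<^sup>2)"
    using w zw by (auto simp: Sigma_set_def)
  have "a *\<^sub>R yy k + b *\<^sub>R ww k \<in> Y k" for k
    using yy ww l2sum_subspace[of k] by (simp add: subspace_add subspace_scale)
  moreover have "summable (\<lambda>k. (norm (a *\<^sub>R yy k + b *\<^sub>R ww k))\<^sup>2)"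
  proof (rule summable_comparison_test')
    show "summable (\<lambda>k. 2 * a\<^sup>2 * (norm (yy k))\<^sup>2 + 2 * b\<^sup>2 * (norm (ww k))\<^sup>2)"
      using yy(2) ww(2) by (intro summable_add summable_mult)
    show "norm ((norm (a *\<^sub>R yy k + b *\<^sub>R ww k))\<^sup>2)
            \<le> 2 * a\<^sup>2 * (norm (yy k))\<^sup>2 + 2 * b\<^sup>2 * (norm (ww k))\<^sup>2" for k
      using power2_norm_add_le[of "a *\<^sub>R yy k" "b *\<^sub>R ww k"] by (simp add: power_mult_distrib)
  qed
  ultimately show ?thesis
    using zw by (simp add: Sigma_set_def sig_add_def sig_scale_def)
qed

lemma param_functional_lincomb:
  assumes p: "p \<in> param_set Y N" and z: "z \<in> Sigma_set Y" and w: "w \<in> Sigma_set Y"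
  shows "param_functional Y p (sig_add (sig_scale a z) (sig_scale b w))
           = a * param_functional Y p z + b * param_functional Y p w"
proof -
  obtain x yy x' ww where zw: "z = (x, yy)" "w = (x', ww)"
    by (cases z, cases w)
  obtain xs \<alpha> ys where p_eq: "p = (xs, \<alpha>, ys)"
    by (cases p)
  have xs: "xs (a *\<^sub>R u + b *\<^sub>R v) = a * xs u + b * xs v" for u v
    using p p_eq by (simp add: param_set_def)
  have ys: "ys k (a *\<^sub>R yy k + b *\<^sub>R ww k) = a * ys k (yy k) + b * ys k (ww k)" for k
    using p p_eq z w zw by (simp add: param_set_def Sigma_set_def)
  have s1: "summable (\<lambda>k. \<alpha> k * ys k (yy k))" and s2: "summable (\<lambda>k. \<alpha> k * ys k (ww k))"
    using param_series_bound(1)[OF p[unfolded p_eq] _ zero_less_one] z w zw by auto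
  have "(\<Sum>k. \<alpha> k * ys k (a *\<^sub>R yy k + b *\<^sub>R ww k))
          = a * (\<Sum>k. \<alpha> k * ys k (yy k)) + b * (\<Sum>k. \<alpha> k * ys k (ww k))"
    unfolding ys using suminf_add[OF summable_mult[OF s1, of a] summable_mult[OF s2, of b]]
    by (simp add: suminf_mult[OF s1] suminf_mult[OF s2] algebra_simps)
  moreover have "(a *\<^sub>R x + b *\<^sub>R x', \<lambda>k. a *\<^sub>R yy k + b *\<^sub>R ww k) \<in> Sigma_set Y"
    using Sigma_set_lincomb[OF z w, of a b] zw by (simp add: sig_add_def sig_scale_def)
  ultimately show ?thesis
    using z w zw by (simp add: p_eq sig_add_def sig_scale_def param_functional_apply xs algebra_simps)
qed

lemma param_functional_in_Lambda_set:
  assumes p: "p \<in> param_set Y N"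
  shows "param_functional Y p \<in> Lambda_set Y N"
proof -
  obtain xs \<alpha> ys where p_eq: "p = (xs, \<alpha>, ys)"
    by (cases p)
  have xs_lin: "xs (a *\<^sub>R u + b *\<^sub>R v) = a * xs u + b * xs v"
    and xs_bound: "\<bar>xs u\<bar> \<le> norm u" for a b u v
    using p by (auto simp: p_eq param_set_def)
  have ys_lin: "y1 \<in> Y k \<Longrightarrow> y2 \<in> Y k \<Longrightarrow> ys k (a *\<^sub>R y1 + b *\<^sub>R y2) = a * ys k y1 + b * ys k y2"
    and ys_bound: "\<bar>ys k y\<bar> \<le> norm y"
    and joint: "y \<in> Y k \<Longrightarrow> \<bar>xs x + ys k y\<bar> \<le> N k x y"
    and \<alpha>_range: "0 \<le> \<alpha> k \<and> \<alpha> k \<le> 1"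
    and \<alpha>_partial: "(\<Sum>k<n. (\<alpha> k)\<^sup>2) \<le> 1"
    for a b x y y1 y2 k n
    using p by (auto simp: p_eq param_set_def)
  have xs: "bounded_linear xs"
  proof (rule bounded_linear_intro[where K = 1])
    show "xs (u + v) = xs u + xs v" for u v
      using xs_lin[of 1 u 1 v] by simp
    show "xs (r *\<^sub>R u) = r *\<^sub>R xs u" for r u
      using xs_lin[of r u 0 0] by simp
    show "norm (xs u) \<le> norm u * 1" for u
      using xs_bound[of u] by simp
  qed
  have ys: "ys k \<in> dual_on (Y k)" for k
    unfolding dual_on_def using ys_lin ys_bound by (auto intro!: exI[of _ 1])
  have "sum_dual_norm (Y k) (N k) xs (ys k) \<le> 1" for k
    using sum_dual_norm_le_one_iff[OF xs ys] joint by blast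
  then show ?thesis
    using xs ys \<alpha>_range summable_power2_if_partial_sums_le[OF \<alpha>_partial]
    unfolding Lambda_set_def param_functional_def p_eq by auto
qed

lemma Lambda_set_subset_image: "Lambda_set Y N \<subseteq> param_functional Y ` param_set Y N"
proof
  fix f assume "f \<in> Lambda_set Y N"
  then obtain xs \<alpha> ys where f: "f = Lambda_fun Y xs \<alpha> ys" and xs: "bounded_linear xs"
    and ys: "\<And>k. ys k \<in> dual_on (Y k)" and norm: "\<And>k. sum_dual_norm (Y k) (N k) xs (ys k) \<le> 1"
    and \<alpha>_range: "\<And>k. 0 \<le> \<alpha> k \<and> \<alpha> k \<le> 1"
    and \<alpha>_summable: "summable (\<lambda>k. (\<alpha> k)\<^sup>2)" and \<alpha>_sum: "(\<Sum>k. (\<alpha> k)\<^sup>2) \<le> 1"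
    unfolding Lambda_set_def by blast
  have joint: "y \<in> Y k \<Longrightarrow> \<bar>xs x + ys k y\<bar> \<le> N k x y" for k x y
    using sum_dual_norm_le_one_iff[OF xs ys] norm by blast
  \<comment> \<open>only the values of \<open>ys k\<close> on \<open>Y k\<close> matter; setting them to 0 elsewhere
    gives \<open>\<bar>ys k y\<bar> \<le> norm y\<close> for every \<open>y\<close>, as the parameter set requires\<close>
  define ys' where "ys' k y = (if y \<in> Y k then ys k y else 0)" for k y
  have xs_lin: "xs (a *\<^sub>R u + b *\<^sub>R v) = a * xs u + b * xs v" for a b u v
    using linear_add[OF bounded_linear.linear[OF xs]] linear_scale[OF bounded_linear.linear[OF xs]]
    by simp
  have xs_bound: "\<bar>xs x\<bar> \<le> norm x" for x
    using joint[where k = 0 and y = 0] subspace_0[OF l2sum_subspace]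
      dual_on_scaleR[OF ys subspace_0[OF l2sum_subspace], of 0 0]
    by (simp add: l2sum_norm_left)
  have ys'_lin: "ys' k (a *\<^sub>R u + b *\<^sub>R v) = a * ys' k u + b * ys' k v"
    if "u \<in> Y k" "v \<in> Y k" for k a b u v
    using ys[of k] l2sum_subspace[of k] that
    by (simp add: ys'_def dual_on_def subspace_add subspace_scale)
  have ys'_bound: "\<bar>ys' k y\<bar> \<le> norm y" for k y
    using joint[where x = 0] linear_0[OF bounded_linear.linear[OF xs]]
    by (simp add: ys'_def l2sum_norm_right)
  have \<alpha>_partial: "(\<Sum>k<n. (\<alpha> k)\<^sup>2) \<le> 1" for n
    using sum_le_suminf[OF \<alpha>_summable, of "{..<n}"] \<alpha>_sum by simp
  have "(xs, \<alpha>, ys') \<in> param_set Y N"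
    using xs_lin xs_bound ys'_lin ys'_bound joint \<alpha>_range \<alpha>_partial
    by (auto simp: param_set_def ys'_def)
  moreover have "f = param_functional Y (xs, \<alpha>, ys')"
    unfolding f param_functional_def Lambda_fun_def
    by (intro restrict_ext) (auto simp: Sigma_set_def ys'_def)
  ultimately show "f \<in> param_functional Y ` param_set Y N"
    by blast
qed

lemma Lambda_set_eq_image: "Lambda_set Y N = param_functional Y ` param_set Y N"
  using Lambda_set_subset_image param_functional_in_Lambda_set by blast

lemma abs_le_Sigma_norm:
  assumes f: "f \<in> Lambda_set Y N" and z: "(x, yy) \<in> Sigma_set Y"
  shows "\<bar>f (x, yy)\<bar> \<le> Sigma_norm Y N (x, yy)"
proof -
  have "\<bar>g (x, yy)\<bar> \<le> norm x + (1 + (\<Sum>k. (norm (yy k))\<^sup>2)) / 2"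
    if g_Lambda: "g \<in> Lambda_set Y N" for g
  proof -
    obtain p where "p \<in> param_set Y N" and "g = param_functional Y p"
      using g_Lambda Lambda_set_subset_image by blast
    then obtain xs \<alpha> ys where p: "(xs, \<alpha>, ys) \<in> param_set Y N"
      and g: "g = param_functional Y (xs, \<alpha>, ys)"
      by (cases p) blast
    have "\<bar>g (x, yy)\<bar> = \<bar>xs x + (\<Sum>k. \<alpha> k * ys k (yy k))\<bar>"
      using z by (simp add: g param_functional_apply)
    also have "\<dots> \<le> \<bar>xs x\<bar> + \<bar>\<Sum>k. \<alpha> k * ys k (yy k)\<bar>"
      by (rule abs_triangle_ineq)
    also have "\<dots> \<le> norm x + (1 + (\<Sum>k. (norm (yy k))\<^sup>2)) / 2"
      using p param_series_bound(2)[OF p z zero_less_one, of 0]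
      by (intro add_mono) (simp_all add: param_set_def)
    finally show ?thesis .
  qed
  then have "bdd_above {\<bar>g (x, yy)\<bar> | g. g \<in> Lambda_set Y N}"
    by (intro bdd_aboveI) blast
  then show ?thesis
    unfolding Sigma_norm_def using f by (intro cSup_upper) blast
qed

lemma Lambda_set_subset_Sigma_dual: "Lambda_set Y N \<subseteq> Sigma_dual Y N"
proof
  fix f assume f: "f \<in> Lambda_set Y N"
  then obtain p where p: "p \<in> param_set Y N" and f_eq: "f = param_functional Y p"
    using Lambda_set_subset_image by blast
  have "f \<in> extensional (Sigma_set Y)"
    by (simp add: f_eq param_functional_def Lambda_fun_def)
  moreover have "\<forall>z\<in>Sigma_set Y. \<forall>w\<in>Sigma_set Y. \<forall>a b.
                   f (sig_add (sig_scale a z) (sig_scale b w)) = a * f z + b * f w"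
    using param_functional_lincomb[OF p] by (simp add: f_eq)
  moreover have "\<forall>z\<in>Sigma_set Y. \<bar>f z\<bar> \<le> 1 * Sigma_norm Y N z"
    using abs_le_Sigma_norm[OF f] by auto
  ultimately show "f \<in> Sigma_dual Y N"
    unfolding Sigma_dual_def by blast
qed

end

theorem lemma2p5:
  fixes Y :: "nat \<Rightarrow> 'y::banach set"
    and N :: "nat \<Rightarrow> 'x::banach \<Rightarrow> 'y \<Rightarrow> real"
  assumes "l2sum_setting TYPE('x) Y N"
  shows "Lambda_set Y N \<subseteq> Sigma_dual Y N \<and> compactin (weak_star_Sigma Y N) (Lambda_set Y N)"
proof
  show "Lambda_set Y N \<subseteq> Sigma_dual Y N"
    using Lambda_set_subset_Sigma_dual[OF assms] .
  have "compactin (subtopology param_topology (param_set Y N)) (param_set Y N)"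
    using compactin_param_set by (simp add: compactin_subtopology)
  then have "compactin (product_topology (\<lambda>_. euclideanreal) (Sigma_set Y)) (Lambda_set Y N)"
    using image_compactin[OF _ continuous_map_param_functional] Lambda_set_eq_image[OF assms]
    by metis
  with \<open>Lambda_set Y N \<subseteq> Sigma_dual Y N\<close>
  show "compactin (weak_star_Sigma Y N) (Lambda_set Y N)"
    by (simp add: weak_star_Sigma_def compactin_subtopology)
qed

end
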